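(* Let $\mathcal{G}=(\mathcal{V},\mathcal{E})$ be a directed graph with terminals $s,t$, let $f:2^{\mathcal{E}}\to\mathbb{R}_+$ be normalized, monotone nondecreasing and submodular, let $C^*$ be an $(s,t)$-cut minimizing $f$, let $\nu^*$ be the optimal value of the Maximum Cooperative Flow problem, and let $\mathcal{P}$ be the set of all $(s,t)$-paths in $\mathcal{G}$ (each viewed as a set of edges). Then $$\frac{f(C^* )}{\sum_{P\in\mathcal{P}}\min_{\emptyset\ne P'\subseteq P}\frac{f(P')}{|P'|}}\;\le\;\frac{f(C^* )}{\nu^*}\;\le\;\frac{f(C^* )}{\max_{P\in\mathcal{P}}\min_{\emptyset\ne P'\subseteq P}\frac{f(P')}{|P'|}}.$$
   Context: An $(s,t)$-cut is a set of edges whose removal disconnects all $s$-$t$ paths. The Maximum Cooperative Flow problem is: maximize $\nu\in\mathbb{R}$ over $\nu$ and $\varphi\in\mathbb{R}^{\mathcal{E}}$ subject to $\varphi\ge 0$; $\sum_{e\in A}\varphi(e)\le f(A)$ for all $A\subseteq\mathcal{E}$; and $\sum_{e\in\delta^+(u)}\varphi(e)-\sum_{e\in\delta^-(u)}\varphi(e)=d(u)\nu$ for all $u\in\mathcal{V}$, where $d(s)=1$, $d(t)=-1$, $d(u)=0$ otherwise, and $\delta^+(u)$, $\delta^-(u)$ are the edges leaving and entering $u$. (It is the dual of the relaxation $\min \tilde f(y)$ s.t. $x(v)-x(u)+y(e)\ge 0$ for $e=(u,v)$, $x(s)-x(t)\ge1$, $y\ge0$, with $\tilde f$ the Lovász extension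 of $f$.) *)

theory Defs
  imports Complex_Main
begin

definition st_paths :: "'v set \<Rightarrow> ('v \<times> 'v) set \<Rightarrow> 'v \<Rightarrow> 'v \<Rightarrow> ('v \<times> 'v) set set" where
  "st_paths V E s t = { set (zip vs (tl vs)) | vs.
      vs \<noteq> [] \<and> hd vs = s \<and> last vs = t \<and> distinct vs \<and> set vs \<subseteq> V \<and>
      set (zip vs (tl vs)) \<subseteq> E }"

definition st_cut :: "'v set \<Rightarrow> ('v \<times> 'v) set \<Rightarrow> 'v \<Rightarrow> 'v \<Rightarrow> ('v \<times> 'v) set \<Rightarrow> bool" where
  "st_cut V E s t C \<longleftrightarrow> C \<subseteq> E \<and> (\<forall>P \<in> st_paths V E s t. P \<inter> C \<noteq> {})"

definition normalized_monotone_submodular :: "'e set \<Rightarrow> ('e set \<Rightarrow> real) \<Rightarrow> bool" where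
  "normalized_monotone_submodular E f \<longleftrightarrow>
     f {} = 0 \<and> (\<forall>A \<subseteq> E. f A \<ge> 0) \<and>
     (\<forall>A B. A \<subseteq> B \<and> B \<subseteq> E \<longrightarrow> f A \<le> f B) \<and>
     (\<forall>A B. A \<subseteq> E \<and> B \<subseteq> E \<longrightarrow> f (A \<union> B) + f (A \<inter> B) \<le> f A + f B)"

definition demand :: "'v \<Rightarrow> 'v \<Rightarrow> 'v \<Rightarrow> real" where
  "demand s t u = (if u = s then 1 else if u = t then -1 else 0)"

definition coop_flow_feasible ::
  "'v set \<Rightarrow> ('v \<times> 'v) set \<Rightarrow> 'v \<Rightarrow> 'v \<Rightarrow> (('v \<times> 'v) set \<Rightarrow> real) \<Rightarrow> real \<Rightarrow> (('v \<times> 'v) \<Rightarrow> real) \<Rightarrow> bool" where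
  "coop_flow_feasible V E s t f \<nu> \<phi> \<longleftrightarrow>
     (\<forall>e \<in> E. \<phi> e \<ge> 0) \<and>
     (\<forall>A \<subseteq> E. (\<Sum>e\<in>A. \<phi> e) \<le> f A) \<and>
     (\<forall>u \<in> V. (\<Sum>e\<in>{e\<in>E. fst e = u}. \<phi> e) - (\<Sum>e\<in>{e\<in>E. snd e = u}. \<phi> e) = demand s t u * \<nu>)"

definition max_coop_flow_value ::
  "'v set \<Rightarrow> ('v \<times> 'v) set \<Rightarrow> 'v \<Rightarrow> 'v \<Rightarrow> (('v \<times> 'v) set \<Rightarrow> real) \<Rightarrow> real \<Rightarrow> bool" where
  "max_coop_flow_value V E s t f \<nu> \<longleftrightarrow>
     (\<exists>\<phi>. coop_flow_feasible V E s t f \<nu> \<phi>) \<and>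
     (\<forall>\<nu>' \<phi>. coop_flow_feasible V E s t f \<nu>' \<phi> \<longrightarrow> \<nu>' \<le> \<nu>)"

definition min_density :: "('e set \<Rightarrow> real) \<Rightarrow> 'e set \<Rightarrow> real" where
  "min_density f P = Min {f P' / real (card P') | P'. P' \<subseteq> P \<and> P' \<noteq> {}}"

end

theory Submission
  imports Defs "HOL-Library.Transitive_Closure_Table"
begin

text \<open>
  For a path \<open>P\<close>, routing the value \<open>min_density f P\<close> uniformly along \<open>P\<close> is a feasible
  cooperative flow, since a set \<open>A\<close> carries at most \<open>|A \<inter> P| \<cdot> min_density f P \<le> f (A \<inter> P) \<le> f A\<close>;
  hence every path density is at most \<open>\<nu>*\<close>. Conversely, averaging an optimal flow \<open>\<phi>\<close> over a
  density-minimizing subset of \<open>P\<close> yields an edge \<open>e \<in> P\<close> with \<open>\<phi> e \<le> min_density f P\<close>. These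
  light edges form an \<open>(s,t)\<close>-cut, and by weak duality \<open>\<nu>*\<close> is at most the flow across any cut,
  so \<open>\<nu>* \<le> \<Sum>\<^sub>P min_density f P\<close>. Taking reciprocals gives the claim.
\<close>

lemma min_density_eq_Min_image:
  "min_density f P = Min ((\<lambda>P'. f P' / card P') ` (Pow P - {{}}))"
  unfolding min_density_def by (rule arg_cong[where f = Min]) auto

lemma min_density_attained:
  assumes "finite P" "P \<noteq> {}"
  obtains P' where "P' \<subseteq> P" "P' \<noteq> {}" "min_density f P = f P' / card P'"
proof -
  have "min_density f P \<in> (\<lambda>P'. f P' / card P') ` (Pow P - {{}})"
    unfolding min_density_eq_Min_image using assms by (intro Min_in) auto
  then show thesis
    using that by auto
qed

lemma min_density_le:
  assumes "finite P" "P' \<subseteq> P" "P' \<noteq> {}"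
  shows "min_density f P \<le> f P' / card P'"
  unfolding min_density_eq_Min_image using assms by (intro Min_le) auto

lemma min_density_nonneg:
  assumes "finite P" "P \<noteq> {}" "\<And>P'. P' \<subseteq> P \<Longrightarrow> 0 \<le> f P'"
  shows "0 \<le> min_density f P"
  using assms by (metis divide_nonneg_nonneg min_density_attained of_nat_0_le_iff)

lemma exists_edge_le_min_density:
  fixes \<phi> :: "'e \<Rightarrow> real"
  assumes "finite P" "P \<noteq> {}" and capacity: "\<And>A. A \<subseteq> P \<Longrightarrow> sum \<phi> A \<le> f A"
  shows "\<exists>e \<in> P. \<phi> e \<le> min_density f P"
proof (rule ccontr)
  assume "\<not> ?thesis"
  then have heavy: "min_density f P < \<phi> e" if "e \<in> P" for e
    using that by auto
  obtain P' where P': "P' \<subseteq> P" "P' \<noteq> {}" "min_density f P = f P' / card P'"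
    using min_density_attained[OF assms(1,2)] .
  have "finite P'"
    using P'(1) assms(1) by (rule finite_subset)
  then have "(\<Sum>e\<in>P'. min_density f P) < sum \<phi> P'"
    using P'(1,2) heavy by (intro sum_strict_mono) auto
  also have "\<dots> \<le> f P'"
    using capacity P'(1) .
  also have "\<dots> = (\<Sum>e\<in>P'. min_density f P)"
    using \<open>finite P'\<close> P'(2,3) by (simp add: card_gt_0_iff)
  finally show False
    by simp
qed

lemma st_pathsI:
  assumes "vs \<noteq> []" "hd vs = s" "last vs = t" "distinct vs" "set vs \<subseteq> V"
    "set (zip vs (tl vs)) \<subseteq> E"
  shows "set (zip vs (tl vs)) \<in> st_paths V E s t"
  unfolding st_paths_def using assms by blast

lemma st_pathsE:
  assumes "P \<in> st_paths V E s t"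
  obtains vs where "P = set (zip vs (tl vs))" "vs \<noteq> []" "hd vs = s" "last vs = t" "distinct vs"
  using assms unfolding st_paths_def by blast

lemma st_path_subset: "P \<in> st_paths V E s t \<Longrightarrow> P \<subseteq> E"
  unfolding st_paths_def by blast

lemma finite_st_path: "P \<in> st_paths V E s t \<Longrightarrow> finite P"
  unfolding st_paths_def by blast

lemma st_path_nonempty:
  assumes "P \<in> st_paths V E s t" "s \<noteq> t"
  shows "P \<noteq> {}"
proof -
  obtain vs where "P = set (zip vs (tl vs))" "vs \<noteq> []" "hd vs = s" "last vs = t"
    using assms(1) by (rule st_pathsE)
  with assms(2) show ?thesis
    by (cases vs rule: remdups_adj.cases) auto
qed

lemma finite_st_paths: "finite E \<Longrightarrow> finite (st_paths V E s t)"
  by (rule finite_subset[of _ "Pow E"]) (auto dest: st_path_subset)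

lemma rtrancl_path_edges:
  assumes "rtrancl_path r x xs y"
  shows "set (zip (x # xs) xs) \<subseteq> {(a, b). r a b}" "last (x # xs) = y"
    "\<forall>z \<in> set xs. \<exists>a. r a z"
  using assms by (induction rule: rtrancl_path.induct) auto

lemma reachable_imp_st_path:
  assumes "(s, t) \<in> R\<^sup>*" "R \<subseteq> E" "E \<subseteq> V \<times> V" "s \<in> V"
  obtains P where "P \<in> st_paths V E s t" "P \<subseteq> R"
proof -
  have "(\<lambda>a b. (a, b) \<in> R)\<^sup>*\<^sup>* s t"
    using assms(1) by (simp add: rtranclp_rtrancl_eq)
  then obtain xs where "rtrancl_path (\<lambda>a b. (a, b) \<in> R) s xs t"
    by (auto simp: rtranclp_eq_rtrancl_path)
  then obtain xs' where path: "rtrancl_path (\<lambda>a b. (a, b) \<in> R) s xs' t" "distinct (s # xs')"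
    by (rule rtrancl_path_distinct)
  note edges = rtrancl_path_edges[OF path(1)]
  have "set (s # xs') \<subseteq> V"
    using edges(3) assms(2-4) by auto
  then have "set (zip (s # xs') (tl (s # xs'))) \<in> st_paths V E s t"
    using path(2) edges(1,2) assms(2) by (intro st_pathsI) auto
  then show thesis
    using that edges(1) by auto
qed

lemma card_path_edges_at:
  assumes "distinct vs"
  shows "card {e \<in> set (zip vs (tl vs)). fst e = u} = (if u \<in> set (butlast vs) then 1 else 0)"
    and "card {e \<in> set (zip vs (tl vs)). snd e = u} = (if u \<in> set (tl vs) then 1 else 0)"
proof -
  have count: "length (filter (\<lambda>x. x = u) xs) = (if u \<in> set xs then 1 else 0)"
    if "distinct xs" for xs :: "'a list"
    using that by (induction xs) (auto simp: filter_empty_conv)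
  have card_eq_length: "card {e \<in> set (zip vs (tl vs)). P e} = length (filter P (zip vs (tl vs)))"
    for P
    using assms by (simp add: distinct_card[symmetric] distinct_zipI1 flip: set_filter)
  show "card {e \<in> set (zip vs (tl vs)). fst e = u} = (if u \<in> set (butlast vs) then 1 else 0)"
    using card_eq_length length_filter_map[of "\<lambda>x. x = u" fst "zip vs (tl vs)"] count[of "butlast vs"]
    by (simp add: assms distinct_butlast map_fst_zip_take butlast_conv_take comp_def)
  show "card {e \<in> set (zip vs (tl vs)). snd e = u} = (if u \<in> set (tl vs) then 1 else 0)"
    using card_eq_length length_filter_map[of "\<lambda>x. x = u" snd "zip vs (tl vs)"] count[of "tl vs"]
    by (simp add: assms distinct_tl map_snd_zip_take comp_def)
qed

lemma path_edges_out_minus_in: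
  assumes "distinct vs" "vs \<noteq> []" "hd vs = s" "last vs = t" "s \<noteq> t"
  shows "real (card {e \<in> set (zip vs (tl vs)). fst e = u})
       - real (card {e \<in> set (zip vs (tl vs)). snd e = u}) = demand s t u"
proof -
  obtain ws where "vs = ws @ [t]"
    using assms(2,4) by (metis append_butlast_last_id)
  then have "u \<in> set (butlast vs) \<longleftrightarrow> u \<in> set vs \<and> u \<noteq> t"
    using assms(1) by auto
  moreover have "u \<in> set (tl vs) \<longleftrightarrow> u \<in> set vs \<and> u \<noteq> s"
    using assms(1-3) by (cases vs) auto
  moreover have "s \<in> set vs" "t \<in> set vs"
    using assms(2-4) by auto
  ultimately show ?thesis
    unfolding card_path_edges_at[OF assms(1)] demand_def using assms(5) by auto
qed

lemma normalized_monotone_submodularD: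
  assumes "normalized_monotone_submodular E f"
  shows "f {} = 0" "A \<subseteq> E \<Longrightarrow> 0 \<le> f A" "A \<subseteq> B \<Longrightarrow> B \<subseteq> E \<Longrightarrow> f A \<le> f B"
  using assms unfolding normalized_monotone_submodular_def by blast+

lemma sum_if_mem_const:
  fixes m :: "'a :: semiring_1"
  shows "finite A \<Longrightarrow> (\<Sum>e\<in>A. if e \<in> P then m else 0) = of_nat (card (A \<inter> P)) * m"
  by (simp add: sum.inter_restrict[symmetric])

lemma path_flow_conservation:
  assumes "finite E" and P: "P \<in> st_paths V E s t" and "s \<noteq> t"
  shows "(\<Sum>e\<in>{e\<in>E. fst e = u}. if e \<in> P then m else 0)
       - (\<Sum>e\<in>{e\<in>E. snd e = u}. if e \<in> P then m else 0) = demand s t u * m"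
proof -
  obtain vs where vs: "P = set (zip vs (tl vs))" "vs \<noteq> []" "hd vs = s" "last vs = t" "distinct vs"
    using P by (rule st_pathsE)
  have "{e\<in>E. fst e = u} \<inter> P = {e\<in>P. fst e = u}" "{e\<in>E. snd e = u} \<inter> P = {e\<in>P. snd e = u}"
    using st_path_subset[OF P] by auto
  then have "(\<Sum>e\<in>{e\<in>E. fst e = u}. if e \<in> P then m else 0)
       - (\<Sum>e\<in>{e\<in>E. snd e = u}. if e \<in> P then m else 0)
       = (real (card {e\<in>P. fst e = u}) - real (card {e\<in>P. snd e = u})) * m"
    using sum_if_mem_const[of "{e\<in>E. fst e = u}" P m] sum_if_mem_const[of "{e\<in>E. snd e = u}" P m]
      \<open>finite E\<close> by (simp add: left_diff_distrib)
  also have "real (card {e\<in>P. fst e = u}) - real (card {e\<in>P. snd e = u}) = demand s t u"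
    unfolding vs(1) by (rule path_edges_out_minus_in[OF vs(5,2,3,4) \<open>s \<noteq> t\<close>])
  finally show ?thesis .
qed

lemma path_flow_capacity:
  fixes f :: "'e set \<Rightarrow> real" and m :: real
  assumes "finite P" "A \<subseteq> E" "m \<le> min_density f P"
    and f_nonneg: "\<And>A. A \<subseteq> E \<Longrightarrow> 0 \<le> f A"
    and f_mono: "\<And>A B. A \<subseteq> B \<Longrightarrow> B \<subseteq> E \<Longrightarrow> f A \<le> f B"
  shows "card (A \<inter> P) * m \<le> f A"
proof (cases "A \<inter> P = {}")
  case True
  then show ?thesis
    using f_nonneg \<open>A \<subseteq> E\<close> by simp
next
  case False
  then have "0 < real (card (A \<inter> P))"
    using \<open>finite P\<close> by (simp add: card_gt_0_iff)
  moreover have "m \<le> f (A \<inter> P) / card (A \<inter> P)"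
    by (rule order_trans[OF \<open>m \<le> min_density f P\<close> min_density_le[OF \<open>finite P\<close> Int_lower2 False]])
  ultimately have "m * card (A \<inter> P) \<le> f (A \<inter> P)"
    by (simp add: pos_le_divide_eq)
  then have "card (A \<inter> P) * m \<le> f (A \<inter> P)"
    by (simp only: mult.commute)
  also have "\<dots> \<le> f A"
    using \<open>A \<subseteq> E\<close> by (intro f_mono) auto
  finally show ?thesis .
qed

lemma uniform_path_flow_feasible:
  assumes "finite E" and P: "P \<in> st_paths V E s t" and "s \<noteq> t"
    and f: "normalized_monotone_submodular E f"
  shows "coop_flow_feasible V E s t f (min_density f P) (\<lambda>e. if e \<in> P then min_density f P else 0)"
proof -
  have "P \<subseteq> E" "finite P" "P \<noteq> {}"
    using st_path_subset[OF P] finite_st_path[OF P] st_path_nonempty[OF P \<open>s \<noteq> t\<close>] .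
  note f_props = normalized_monotone_submodularD[OF f]
  have "0 \<le> min_density f P"
    using \<open>finite P\<close> \<open>P \<noteq> {}\<close> by (rule min_density_nonneg) (use \<open>P \<subseteq> E\<close> f_props(2) in blast)
  moreover have "(\<Sum>e\<in>A. if e \<in> P then min_density f P else 0) \<le> f A" if "A \<subseteq> E" for A
    using path_flow_capacity[OF \<open>finite P\<close> that order_refl f_props(2,3)]
      that \<open>finite E\<close> by (simp add: sum_if_mem_const finite_subset)
  ultimately show ?thesis
    unfolding coop_flow_feasible_def
    using path_flow_conservation[OF assms(1-3)] by simp
qed

lemma min_density_le_flow_value:
  assumes "finite E" "P \<in> st_paths V E s t" "s \<noteq> t" "normalized_monotone_submodular E f"
    and "max_coop_flow_value V E s t f \<nu>"
  shows "min_density f P \<le> \<nu>"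
  using uniform_path_flow_feasible[OF assms(1-4)] assms(5) unfolding max_coop_flow_value_def by blast

lemma sum_over_endpoints:
  assumes "finite E" "finite S"
  shows "(\<Sum>u\<in>S. \<Sum>e\<in>{e\<in>E. g e = u}. \<phi> e) = (\<Sum>e\<in>{e\<in>E. g e \<in> S}. \<phi> e)"
proof -
  have "(\<Sum>u\<in>S. \<Sum>e\<in>{e\<in>E. g e = u}. \<phi> e) = (\<Sum>u\<in>S. \<Sum>e\<in>{e \<in> {e\<in>E. g e \<in> S}. g e = u}. \<phi> e)"
    by (intro sum.cong) auto
  also have "\<dots> = (\<Sum>e\<in>{e\<in>E. g e \<in> S}. \<phi> e)"
    using assms by (intro sum.group) auto
  finally show ?thesis .
qed

lemma flow_value_eq_net_outflow:
  assumes feasible: "coop_flow_feasible V E s t f \<nu> \<phi>"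
    and "finite E" "finite S" "S \<subseteq> V" "s \<in> S" "t \<notin> S"
  shows "\<nu> = (\<Sum>e\<in>{e\<in>E. fst e \<in> S}. \<phi> e) - (\<Sum>e\<in>{e\<in>E. snd e \<in> S}. \<phi> e)"
proof -
  have conservation: "\<And>u. u \<in> V \<Longrightarrow>
      (\<Sum>e\<in>{e\<in>E. fst e = u}. \<phi> e) - (\<Sum>e\<in>{e\<in>E. snd e = u}. \<phi> e) = demand s t u * \<nu>"
    using feasible unfolding coop_flow_feasible_def by blast
  have "\<nu> = (\<Sum>u\<in>S. if u = s then \<nu> else 0)"
    using \<open>finite S\<close> \<open>s \<in> S\<close> by simp
  also have "\<dots> = (\<Sum>u\<in>S. demand s t u * \<nu>)"
    using \<open>t \<notin> S\<close> by (intro sum.cong) (auto simp: demand_def)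
  also have "\<dots> = (\<Sum>u\<in>S. (\<Sum>e\<in>{e\<in>E. fst e = u}. \<phi> e) - (\<Sum>e\<in>{e\<in>E. snd e = u}. \<phi> e))"
    using conservation \<open>S \<subseteq> V\<close> by (intro sum.cong) auto
  also have "\<dots> = (\<Sum>e\<in>{e\<in>E. fst e \<in> S}. \<phi> e) - (\<Sum>e\<in>{e\<in>E. snd e \<in> S}. \<phi> e)"
    unfolding sum_subtractf sum_over_endpoints[OF \<open>finite E\<close> \<open>finite S\<close>] ..
  finally show ?thesis .
qed

lemma reachable_in_vertices:
  assumes "(s, u) \<in> R\<^sup>*" "R \<subseteq> V \<times> V" "s \<in> V"
  shows "u \<in> V"
  using assms by (induction rule: rtrancl_induct) auto

lemma flow_value_le_cut:
  assumes "finite V" "E \<subseteq> V \<times> V" "s \<in> V"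
    and feasible: "coop_flow_feasible V E s t f \<nu> \<phi>" and cut: "st_cut V E s t C"
  shows "\<nu> \<le> sum \<phi> C"
proof -
  have "finite E"
    using assms(1) by (intro finite_subset[OF assms(2)]) simp
  have "C \<subseteq> E"
    using cut unfolding st_cut_def by blast
  have \<phi>_nonneg: "\<And>e. e \<in> E \<Longrightarrow> 0 \<le> \<phi> e"
    using feasible unfolding coop_flow_feasible_def by blast
  define S where "S = {u. (s, u) \<in> (E - C)\<^sup>*}"
  have "S \<subseteq> V"
    unfolding S_def using assms(2,3) reachable_in_vertices[of s _ "E - C" V] by blast
  then have "finite S"
    using assms(1) by (rule finite_subset)
  have "s \<in> S"
    by (simp add: S_def)
  have "t \<notin> S"
  proof
    assume "t \<in> S"
    then have "(s, t) \<in> (E - C)\<^sup>*"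
      by (simp add: S_def)
    then obtain P where "P \<in> st_paths V E s t" "P \<subseteq> E - C"
      by (rule reachable_imp_st_path[OF _ Diff_subset assms(2,3)])
    then show False
      using cut unfolding st_cut_def by blast
  qed
  define A where "A = {e\<in>E. fst e \<in> S}"
  define B where "B = {e\<in>E. snd e \<in> S}"
  have "finite A" "finite B"
    using \<open>finite E\<close> by (simp_all add: A_def B_def)
  \<comment> \<open>an edge leaving \<open>S\<close> cannot avoid \<open>C\<close>, as its head would be reachable\<close>
  have "A - B \<subseteq> C"
  proof
    fix e assume e: "e \<in> A - B"
    show "e \<in> C"
    proof (rule ccontr)
      assume "e \<notin> C"
      then have "(s, snd e) \<in> (E - C)\<^sup>*"
        using e by (auto simp: A_def S_def intro: rtrancl_into_rtrancl[of s "fst e"])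
      then show False
        using e by (auto simp: A_def B_def S_def)
    qed
  qed
  have "\<nu> = sum \<phi> A - sum \<phi> B"
    unfolding A_def B_def
    using feasible \<open>finite E\<close> \<open>finite S\<close> \<open>S \<subseteq> V\<close> \<open>s \<in> S\<close> \<open>t \<notin> S\<close>
    by (rule flow_value_eq_net_outflow)
  also have "\<dots> \<le> sum \<phi> (A - B)"
  proof -
    have "sum \<phi> A = sum \<phi> (A - B) + sum \<phi> (A \<inter> B)"
      using \<open>finite A\<close> by (metis Diff_Diff_Int Diff_subset add.commute inf.commute sum.subset_diff)
    moreover have "sum \<phi> (A \<inter> B) \<le> sum \<phi> B"
      using \<open>finite B\<close> \<phi>_nonneg by (intro sum_mono2) (auto simp: B_def)
    ultimately show ?thesis
      by linarith
  qed
  also have "\<dots> \<le> sum \<phi> C"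
    using \<open>A - B \<subseteq> C\<close> \<open>C \<subseteq> E\<close> \<open>finite E\<close> \<phi>_nonneg by (intro sum_mono2) (auto intro: finite_subset)
  finally show ?thesis .
qed

lemma flow_value_le_sum_min_density:
  assumes "finite V" "E \<subseteq> V \<times> V" "s \<in> V" "s \<noteq> t"
    and feasible: "coop_flow_feasible V E s t f \<nu> \<phi>"
  shows "\<nu> \<le> (\<Sum>P\<in>st_paths V E s t. min_density f P)"
proof -
  let ?Ps = "st_paths V E s t"
  have "finite E"
    using assms(1) by (intro finite_subset[OF assms(2)]) simp
  have \<phi>_nonneg: "\<And>e. e \<in> E \<Longrightarrow> 0 \<le> \<phi> e"
    and capacity: "\<And>A. A \<subseteq> E \<Longrightarrow> sum \<phi> A \<le> f A"
    using feasible unfolding coop_flow_feasible_def by blast+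
  have "\<exists>e \<in> P. \<phi> e \<le> min_density f P" if P: "P \<in> ?Ps" for P
  proof (rule exists_edge_le_min_density[OF finite_st_path[OF P] st_path_nonempty[OF P \<open>s \<noteq> t\<close>]])
    show "sum \<phi> A \<le> f A" if "A \<subseteq> P" for A
      using capacity st_path_subset[OF P] that by blast
  qed
  then obtain light where light: "\<And>P. P \<in> ?Ps \<Longrightarrow> light P \<in> P \<and> \<phi> (light P) \<le> min_density f P"
    by metis
  have light_in_E: "light P \<in> E" if "P \<in> ?Ps" for P
    using light[OF that] st_path_subset[OF that] by blast
  have "st_cut V E s t (light ` ?Ps)"
    unfolding st_cut_def using light light_in_E by blast
  then have "\<nu> \<le> sum \<phi> (light ` ?Ps)"
    by (rule flow_value_le_cut[OF assms(1-3) feasible])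
  also have "\<dots> \<le> (\<Sum>P\<in>?Ps. \<phi> (light P))"
    using sum_image_le[where g = \<phi> and f = light, OF finite_st_paths[OF \<open>finite E\<close>]] light_in_E \<phi>_nonneg
    by (simp add: comp_def)
  also have "\<dots> \<le> (\<Sum>P\<in>?Ps. min_density f P)"
    using light by (intro sum_mono) blast
  finally show ?thesis .
qed

lemma divide_between_Max_and_sum:
  fixes F \<nu> :: real and g :: "'a \<Rightarrow> real"
  assumes "finite A" "A \<noteq> {}" "\<And>x. x \<in> A \<Longrightarrow> 0 \<le> g x" "0 \<le> F"
    and "Max (g ` A) \<le> \<nu>" "\<nu> \<le> sum g A"
  shows "F / sum g A \<le> F / \<nu> \<and> F / \<nu> \<le> F / Max (g ` A)"
proof -
  have g_le_Max: "g x \<le> Max (g ` A)" if "x \<in> A" for x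
    using assms(1) that by simp
  then have "0 \<le> Max (g ` A)"
    using assms(2,3) by (meson ex_in_conv order.trans)
  show ?thesis
  proof (cases "Max (g ` A) = 0")
    case True
    \<comment> \<open>then \<open>\<nu> = sum g A = 0\<close> and every quotient is \<open>F / 0 = 0\<close>\<close>
    have "g x = 0" if "x \<in> A" for x
      using g_le_Max[OF that] assms(3)[OF that] True by linarith
    then have "sum g A = 0"
      by simp
    with True assms(5,6) show ?thesis
      by simp
  next
    case False
    with \<open>0 \<le> Max (g ` A)\<close> have "0 < Max (g ` A)"
      by linarith
    then show ?thesis
      using assms(4-6) by (auto intro!: divide_left_mono)
  qed
qed

theorem lemma2:
  fixes V :: "'v set" and E :: "('v \<times> 'v) set" and s t :: 'v
    and f :: "('v \<times> 'v) set \<Rightarrow> real" and Cstar :: "('v \<times> 'v) set" and \<nu>star :: real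
  assumes "finite V" and "E \<subseteq> V \<times> V" and "s \<in> V" and "t \<in> V" and "s \<noteq> t"
    and "normalized_monotone_submodular E f"
    and "st_cut V E s t Cstar"
    and "\<And>C. st_cut V E s t C \<Longrightarrow> f Cstar \<le> f C"
    and "max_coop_flow_value V E s t f \<nu>star"
  shows "f Cstar / (\<Sum>P\<in>st_paths V E s t. min_density f P) \<le> f Cstar / \<nu>star
       \<and> f Cstar / \<nu>star \<le> f Cstar / (Max ((\<lambda>P. min_density f P) ` st_paths V E s t))"
proof -
  let ?Ps = "st_paths V E s t"
  have "finite E"
    using assms(1) by (intro finite_subset[OF assms(2)]) simp
  note f_nonneg = normalized_monotone_submodularD(2)[OF assms(6)]
  have "0 \<le> f Cstar"
    using assms(7) f_nonneg unfolding st_cut_def by blast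
  show ?thesis
  proof (cases "?Ps = {}")
    case True
    \<comment> \<open>\<open>{}\<close> is a cut, so \<open>f Cstar = 0\<close> and the junk value \<open>Max {}\<close> does not matter\<close>
    then have "f Cstar \<le> f {}"
      using assms(8) unfolding st_cut_def by blast
    then show ?thesis
      using \<open>0 \<le> f Cstar\<close> normalized_monotone_submodularD(1)[OF assms(6)] by simp
  next
    case False
    obtain \<phi> where "coop_flow_feasible V E s t f \<nu>star \<phi>"
      using assms(9) unfolding max_coop_flow_value_def by blast
    then have "\<nu>star \<le> (\<Sum>P\<in>?Ps. min_density f P)"
      by (rule flow_value_le_sum_min_density[OF assms(1-3,5)])
    moreover have "min_density f P \<le> \<nu>star" if "P \<in> ?Ps" for P
      using \<open>finite E\<close> that assms(5,6,9) by (rule min_density_le_flow_value)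
    moreover have "0 \<le> min_density f P" if "P \<in> ?Ps" for P
      using finite_st_path[OF that] st_path_nonempty[OF that \<open>s \<noteq> t\<close>]
      by (rule min_density_nonneg) (use f_nonneg st_path_subset[OF that] in blast)
    ultimately show ?thesis
      using divide_between_Max_and_sum[OF finite_st_paths[OF \<open>finite E\<close>] False _ \<open>0 \<le> f Cstar\<close>]
        finite_st_paths[OF \<open>finite E\<close>] False
      by (simp add: Max_le_iff)
  qed
qed

end
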